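(* Under Assumptions (A1), (A2), (A3), for every $\mu\in\mathbb{R}$ the function $H$ belongs to $C^{2}(\mathbb{R})$ and $$L_H:=\sup_{x\in\mathbb{R}}|H(x)+\mu|+\sup_{x\in\mathbb{R}}|H'(x)|+\sup_{x\in\mathbb{R}}|H''(x)|<\infty,$$ and $L_H$ does not depend on $\mu$. In particular $H$ and $H'$ are globally Lipschitz continuous with Lipschitz constants bounded by $L_H$, and $\sup_{x\in\mathbb{R}}|H(x)|\le L_H+|\mu|$.
   Context: Let $l<r$ be real numbers and $f,g:\mathbb{R}\to\mathbb{R}$. Assumption (A1): the restriction of $f$ to $[l,r]$ belongs to $C^{2}([l,r])$. Assumption (A2): the restriction of $g$ to $[l,r]$ belongs to $C^{3}([l,r])$, $g(x)>0$ for every $x\in(l,r)$, and for every $w_0\in(l,r)$ one has $\int_{w_0}^{l}\frac{1}{g(w)}\,dw=-\infty$ and $\int_{w_0}^{r}\frac{1}{g(w)}\,dw=+\infty$. Assumption (A3): the limits $\lim_{x\searrow l}f(x)/g(x)$ and $\lim_{x\nearrow r}f(x)/g(x)$ exist and are finite. Fix $w_0\in(l,r)$ and define $\Phi:(l,r)\to\mathbb{R}$, $\Phi(x)=\int_{w_0}^{x}\frac{1}{g(w)}\,dw$ (a bijection onto $\mathbb{R}$ under (A2)). For $\mu\in\mathbb{R}$ define, for $x\in\mathbb{R}$, $\tilde H(x)=\frac{f(\Phi^{-1}(x))}{g(\Phi^{-1}(x))}-\frac12 g'(\Phi^{-1}(x))$ and $H(x)=\tilde H(x)-\mu$. *)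

theory Defs
  imports "HOL-Analysis.Analysis"
begin

definition Ck_on_closed :: "nat \<Rightarrow> real \<Rightarrow> real \<Rightarrow> (real \<Rightarrow> real) \<Rightarrow> bool" where
  "Ck_on_closed k l r f \<longleftrightarrow>
     (\<exists>D :: nat \<Rightarrow> real \<Rightarrow> real.
        (\<forall>x\<in>{l..r}. D 0 x = f x) \<and>
        (\<forall>j<k. \<forall>x\<in>{l..r}. (D j has_real_derivative D (Suc j) x) (at x within {l..r})) \<and>
        continuous_on {l..r} (D k))"

definition Phi :: "(real \<Rightarrow> real) \<Rightarrow> real \<Rightarrow> real \<Rightarrow> real" where
  "Phi g w0 x = (if w0 \<le> x then integral {w0..x} (\<lambda>w. 1 / g w)
                 else - integral {x..w0} (\<lambda>w. 1 / g w))"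

definition Phi_inv :: "real \<Rightarrow> real \<Rightarrow> (real \<Rightarrow> real) \<Rightarrow> real \<Rightarrow> real \<Rightarrow> real" where
  "Phi_inv l r g w0 = inv_into {l<..<r} (Phi g w0)"

definition Htilde :: "real \<Rightarrow> real \<Rightarrow> (real \<Rightarrow> real) \<Rightarrow> (real \<Rightarrow> real) \<Rightarrow> real \<Rightarrow> real \<Rightarrow> real" where
  "Htilde l r f g w0 x =
     f (Phi_inv l r g w0 x) / g (Phi_inv l r g w0 x) - 1/2 * deriv g (Phi_inv l r g w0 x)"

end

theory Submission
  imports Defs
begin

text \<open>
  Since \<open>\<Phi>' = 1/g\<close>, the inverse \<open>\<Psi>\<close> of \<open>\<Phi>\<close> satisfies \<open>\<Psi>' = g \<circ> \<Psi>\<close>, so in the variable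
  \<open>y = \<Psi> x\<close> differentiation in \<open>x\<close> becomes the operator \<open>g d/dy\<close>. Hence \<open>H + \<mu> = F \<circ> \<Psi>\<close>
  for the Lamperti drift \<open>F = f/g - g'/2\<close>, \<open>H' = K \<circ> \<Psi>\<close> and \<open>H'' = M \<circ> \<Psi>\<close> with
  \<open>K = g F'\<close> and \<open>M = g K'\<close>. On \<open>(l,r)\<close> the functions \<open>F, K, M\<close> are polynomials in \<open>f/g\<close>
  and in \<open>f, f', f'', g, g', g'', g'''\<close>: the quotient is bounded by (A3) and continuity, the
  others by continuity on the compact interval \<open>[l,r]\<close>. The Lipschitz bounds then follow
  from the mean value theorem, and none of these bounds involves \<open>\<mu>\<close>. The divergence of
  \<open>\<integral> 1/g\<close> in (A2) is what makes \<open>\<Phi>\<close> onto, so that \<open>\<Psi>\<close> is defined on all of \<open>\<real>\<close>.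
\<close>

lemma Ck_on_closed_continuous_on:
  assumes "Ck_on_closed k l r f"
  obtains D where "\<And>x. x \<in> {l..r} \<Longrightarrow> D 0 x = f x"
    and "\<And>j x. j < k \<Longrightarrow> x \<in> {l..r} \<Longrightarrow>
      (D j has_real_derivative D (Suc j) x) (at x within {l..r})"
    and "\<And>j. j \<le> k \<Longrightarrow> continuous_on {l..r} (D j)"
proof -
  obtain D where D0: "\<forall>x\<in>{l..r}. D 0 x = f x"
    and D: "\<forall>j<k. \<forall>x\<in>{l..r}. (D j has_real_derivative D (Suc j) x) (at x within {l..r})"
    and Dk: "continuous_on {l..r} (D k)"
    using assms unfolding Ck_on_closed_def by blast
  have cont: "continuous_on {l..r} (D j)" if "j \<le> k" for j
  proof (cases "j = k")
    case False
    with that D show ?thesis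
      unfolding continuous_on_eq_continuous_within by (meson DERIV_continuous less_le)
  qed (use Dk in simp)
  show thesis
  proof (rule that[of D])
    show "D 0 x = f x" if "x \<in> {l..r}" for x using D0 that by blast
    show "(D j has_real_derivative D (Suc j) x) (at x within {l..r})" if "j < k" "x \<in> {l..r}" for j x
      using D that by blast
    show "continuous_on {l..r} (D j)" if "j \<le> k" for j
      using that by (rule cont)
  qed
qed

lemma Ck_on_closed_imp_continuous_on:
  assumes "Ck_on_closed k l r f"
  shows "continuous_on {l..r} f"
proof -
  obtain D where D0: "\<And>x. x \<in> {l..r} \<Longrightarrow> D 0 x = f x"
    and cont: "\<And>j. j \<le> k \<Longrightarrow> continuous_on {l..r} (D j)"
    using Ck_on_closed_continuous_on[OF assms] by metis
  show ?thesis
    by (rule continuous_on_cong[THEN iffD1, OF refl _ cont[of 0]]) (simp_all add: D0)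
qed

lemma Ck_on_closed_interior:
  assumes "Ck_on_closed k l r f"
  obtains D where "\<And>x. x \<in> {l..r} \<Longrightarrow> D 0 x = f x"
    and "\<And>j x. j < k \<Longrightarrow> x \<in> {l<..<r} \<Longrightarrow> (D j has_real_derivative D (Suc j) x) (at x)"
    and "\<And>j x. j \<le> k \<Longrightarrow> x \<in> {l<..<r} \<Longrightarrow> isCont (D j) x"
    and "\<And>j. j \<le> k \<Longrightarrow> bounded (D j ` {l<..<r})"
proof -
  obtain D where D0: "\<And>x. x \<in> {l..r} \<Longrightarrow> D 0 x = f x"
    and D: "\<And>j x. j < k \<Longrightarrow> x \<in> {l..r} \<Longrightarrow>
      (D j has_real_derivative D (Suc j) x) (at x within {l..r})"
    and cont: "\<And>j. j \<le> k \<Longrightarrow> continuous_on {l..r} (D j)"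
    using Ck_on_closed_continuous_on[OF assms] by metis
  show thesis
  proof (rule that[of D])
    show "D 0 x = f x" if "x \<in> {l..r}" for x using D0 that .
    show "(D j has_real_derivative D (Suc j) x) (at x)" if "j < k" "x \<in> {l<..<r}" for j x
    proof -
      have "at x within {l..r} = at x" using that(2) by (simp add: at_within_Icc_at)
      then show ?thesis using D[OF that(1), of x] that(2) by simp
    qed
    show "isCont (D j) x" if "j \<le> k" "x \<in> {l<..<r}" for j x
      using continuous_on_interior[OF cont[OF that(1)]] that(2) by simp
    show "bounded (D j ` {l<..<r})" if "j \<le> k" for j
      using compact_imp_bounded[OF compact_continuous_image[OF cont[OF that] compact_Icc]]
      by (rule bounded_subset) auto
  qed
qed

lemma higher_deriv_eq_if_derivative_chain:
  assumes S: "open S" and D0: "\<And>x. x \<in> S \<Longrightarrow> D 0 x = f x"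
    and D: "\<And>j x. j < k \<Longrightarrow> x \<in> S \<Longrightarrow> (D j has_real_derivative D (Suc j) x) (at x)"
  shows "j \<le> k \<Longrightarrow> x \<in> S \<Longrightarrow> (deriv ^^ j) f x = D j x"
proof (induction j arbitrary: x)
  case 0
  then show ?case using D0 by simp
next
  case (Suc j)
  then have j: "j < k" and x: "x \<in> S" by auto
  have "((deriv ^^ j) f has_real_derivative D (Suc j) x) (at x)"
  proof (rule has_field_derivative_transform_within_open[OF D[OF j x] S x])
    show "D j z = (deriv ^^ j) f z" if "z \<in> S" for z
      using Suc.IH[of z] j that by simp
  qed
  then show ?case by (simp add: DERIV_imp_deriv)
qed

lemma Ck_on_closed_higher_deriv:
  assumes f: "Ck_on_closed k l r f"
  shows "j < k \<Longrightarrow> y \<in> {l<..<r} \<Longrightarrow>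
      ((deriv ^^ j) f has_real_derivative (deriv ^^ Suc j) f y) (at y)"
    and "j \<le> k \<Longrightarrow> y \<in> {l<..<r} \<Longrightarrow> isCont ((deriv ^^ j) f) y"
    and "j \<le> k \<Longrightarrow> bounded ((deriv ^^ j) f ` {l<..<r})"
proof -
  obtain D where D0: "\<And>x. x \<in> {l..r} \<Longrightarrow> D 0 x = f x"
    and D: "\<And>j x. j < k \<Longrightarrow> x \<in> {l<..<r} \<Longrightarrow> (D j has_real_derivative D (Suc j) x) (at x)"
    and D_cont: "\<And>j x. j \<le> k \<Longrightarrow> x \<in> {l<..<r} \<Longrightarrow> isCont (D j) x"
    and D_bounded: "\<And>j. j \<le> k \<Longrightarrow> bounded (D j ` {l<..<r})"
    using Ck_on_closed_interior[OF f] by metis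
  have D0': "D 0 x = f x" if "x \<in> {l<..<r}" for x using D0 that by simp
  have eq: "(deriv ^^ j) f x = D j x" if "j \<le> k" "x \<in> {l<..<r}" for j x
    using higher_deriv_eq_if_derivative_chain[of "{l<..<r}" D f k, OF open_greaterThanLessThan D0' D that] .
  show "((deriv ^^ j) f has_real_derivative (deriv ^^ Suc j) f y) (at y)"
    if j: "j < k" and y: "y \<in> {l<..<r}" for y
  proof -
    have "((deriv ^^ j) f has_real_derivative D (Suc j) y) (at y)"
    proof (rule has_field_derivative_transform_within_open[OF D[OF j y] open_greaterThanLessThan y])
      show "D j x = (deriv ^^ j) f x" if "x \<in> {l<..<r}" for x using eq[of j x] j that by simp
    qed
    then show ?thesis using eq[of "Suc j" y] j y by simp
  qed
  show "isCont ((deriv ^^ j) f) y" if j: "j \<le> k" and y: "y \<in> {l<..<r}" for y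
  proof -
    have "continuous (at y within UNIV) ((deriv ^^ j) f)"
    proof (rule continuous_transform_within_openin[where S="{l<..<r}", OF _ _ y])
      show "continuous (at y within UNIV) (D j)" using D_cont[OF j y] by simp
      show "D j x = (deriv ^^ j) f x" if "x \<in> {l<..<r}" for x using eq[of j x] j that by simp
    qed simp
    then show ?thesis by simp
  qed
  show "bounded ((deriv ^^ j) f ` {l<..<r})" if j: "j \<le> k"
  proof -
    have "(deriv ^^ j) f ` {l<..<r} = D j ` {l<..<r}"
      by (rule image_cong) (simp_all add: eq j)
    then show ?thesis using D_bounded[OF j] by simp
  qed
qed

lemma bounded_mult_comp:
  fixes f g :: "'a \<Rightarrow> 'b::real_normed_algebra"
  assumes "bounded (f ` S)" "bounded (g ` S)"
  shows "bounded ((\<lambda>x. f x * g x) ` S)"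
proof -
  obtain B C where "\<And>x. x \<in> S \<Longrightarrow> norm (f x) \<le> B" "\<And>x. x \<in> S \<Longrightarrow> norm (g x) \<le> C"
    using assms by (auto simp: bounded_iff)
  then have "norm (f x * g x) \<le> B * C" if "x \<in> S" for x
    using that norm_mult_ineq[of "f x" "g x"] mult_mono[of "norm (f x)" B "norm (g x)" C]
    by (smt (verit) norm_ge_zero)
  then show ?thesis by (auto simp: bounded_iff)
qed

lemma bounded_const_comp: "bounded ((\<lambda>x. c) ` S)"
  by (rule bounded_subset[of "{c}"]) auto

lemma bounded_image_greaterThanLessThan_if_tendsto:
  fixes q :: "real \<Rightarrow> 'a::metric_space"
  assumes q: "continuous_on {l<..<r} q"
    and left: "(q \<longlongrightarrow> c1) (at_right l)" and right: "(q \<longlongrightarrow> c2) (at_left r)"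
  shows "bounded (q ` {l<..<r})"
proof -
  obtain a where a: "l < a" "\<And>y. l < y \<Longrightarrow> y < a \<Longrightarrow> q y \<in> ball c1 1"
    using left[unfolded tendsto_iff, rule_format, of 1]
    by (auto simp: eventually_at_right_field dist_commute)
  obtain b where b: "b < r" "\<And>y. b < y \<Longrightarrow> y < r \<Longrightarrow> q y \<in> ball c2 1"
    using right[unfolded tendsto_iff, rule_format, of 1]
    by (auto simp: eventually_at_left_field dist_commute)
  have "bounded (q ` {a..b})"
    using a(1) b(1) by (intro compact_imp_bounded compact_continuous_image continuous_on_subset[OF q]) auto
  moreover have "q ` {l<..<r} \<subseteq> ball c1 1 \<union> q ` {a..b} \<union> ball c2 1"
  proof
    fix z assume "z \<in> q ` {l<..<r}"
    then obtain y where "z = q y" "l < y" "y < r" by auto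
    then show "z \<in> ball c1 1 \<union> q ` {a..b} \<union> ball c2 1"
      using a(2)[of y] b(2)[of y] by (cases "y < a"; cases "b < y") auto
  qed
  ultimately show ?thesis
    by (meson bounded_Un bounded_ball bounded_subset)
qed

lemma bounded_ratio_image_greaterThanLessThan_if_tendsto:
  fixes f g :: "real \<Rightarrow> real"
  assumes f: "continuous_on {l..r} f" and g: "continuous_on {l..r} g"
    and g_nz: "\<forall>y\<in>{l<..<r}. g y \<noteq> 0"
    and left: "((\<lambda>y. f y / g y) \<longlongrightarrow> c1) (at_right l)"
    and right: "((\<lambda>y. f y / g y) \<longlongrightarrow> c2) (at_left r)"
  shows "bounded ((\<lambda>y. f y / g y) ` {l<..<r})"
proof -
  have "continuous_on {l<..<r} f" "continuous_on {l<..<r} g"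
    using f g by (auto elim: continuous_on_subset)
  then have "continuous_on {l<..<r} (\<lambda>y. f y / g y)"
    using g_nz by (intro continuous_intros) auto
  then show ?thesis
    using left right by (rule bounded_image_greaterThanLessThan_if_tendsto)
qed

lemma Phi_eq_integral_diff:
  assumes "a \<le> w0" "w0 \<le> b" "x \<in> {a..b}" "continuous_on {a..b} (\<lambda>w. 1 / g w)"
  shows "Phi g w0 x = integral {a..x} (\<lambda>w. 1 / g w) - integral {a..w0} (\<lambda>w. 1 / g w)"
proof -
  have int: "(\<lambda>w. 1 / g w) integrable_on {a..c}" if "c \<in> {a..b}" for c
    using that by (intro integrable_continuous_real continuous_on_subset[OF assms(4)]) auto
  show ?thesis
  proof (cases "w0 \<le> x")
    case True
    then show ?thesis
      using Henstock_Kurzweil_Integration.integral_combine[OF assms(1) True int] assms(3)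
      by (simp add: Phi_def)
  next
    case False
    then show ?thesis
      using Henstock_Kurzweil_Integration.integral_combine[of a x w0, OF _ _ int] assms
      by (simp add: Phi_def)
  qed
qed

lemma has_real_derivative_Phi:
  assumes g: "continuous_on {l<..<r} g" "\<forall>x\<in>{l<..<r}. g x \<noteq> 0"
    and w0: "w0 \<in> {l<..<r}" and y: "y \<in> {l<..<r}"
  shows "(Phi g w0 has_real_derivative 1 / g y) (at y)"
proof -
  define a where "a = (l + min y w0) / 2"
  define b where "b = (r + max y w0) / 2"
  have ab: "a < y" "y < b" "a \<le> w0" "w0 \<le> b" "{a..b} \<subseteq> {l<..<r}"
    using w0 y unfolding a_def b_def by auto
  have cont: "continuous_on {a..b} (\<lambda>w. 1 / g w)"
    using ab(5) g by (intro continuous_intros continuous_on_subset[OF g(1)]) auto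
  have "((\<lambda>u. integral {a..u} (\<lambda>w. 1 / g w) - integral {a..w0} (\<lambda>w. 1 / g w))
      has_real_derivative 1 / g y) (at y within {a<..<b})"
    using integral_has_real_derivative[OF cont, of y] ab
    by (auto intro!: derivative_eq_intros intro: DERIV_subset)
  then have "((\<lambda>u. integral {a..u} (\<lambda>w. 1 / g w) - integral {a..w0} (\<lambda>w. 1 / g w))
      has_real_derivative 1 / g y) (at y)"
    using ab at_within_open[of y "{a<..<b}"] by simp
  then show ?thesis
    by (rule has_field_derivative_transform_within_open[of _ _ _ "{a<..<b}"])
      (use ab Phi_eq_integral_diff[OF ab(3,4) _ cont] in auto)
qed

lemma strict_mono_on_Phi:
  assumes g: "continuous_on {l<..<r} g" "\<forall>x\<in>{l<..<r}. g x > 0"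
    and w0: "w0 \<in> {l<..<r}"
  shows "strict_mono_on {l<..<r} (Phi g w0)"
proof (rule strict_mono_onI)
  fix x y assume xy: "x \<in> {l<..<r}" "y \<in> {l<..<r}" "x < y"
  show "Phi g w0 x < Phi g w0 y"
  proof (rule DERIV_pos_imp_increasing[OF xy(3)])
    fix z assume "x \<le> z" "z \<le> y"
    then have "z \<in> {l<..<r}" using xy by auto
    then show "\<exists>d. (Phi g w0 has_real_derivative d) (at z) \<and> 0 < d"
      using has_real_derivative_Phi[OF g(1) _ w0] g(2) by (metis less_irrefl zero_less_divide_1_iff)
  qed
qed

lemma Phi_image_eq_UNIV:
  assumes g: "continuous_on {l<..<r} g" "\<forall>x\<in>{l<..<r}. g x \<noteq> 0"
    and w0: "w0 \<in> {l<..<r}"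
    and left: "filterlim (\<lambda>a. integral {a..w0} (\<lambda>w. 1 / g w)) at_top (at_right l)"
    and right: "filterlim (\<lambda>b. integral {w0..b} (\<lambda>w. 1 / g w)) at_top (at_left r)"
  shows "Phi g w0 ` {l<..<r} = UNIV"
proof -
  have "c \<in> Phi g w0 ` {l<..<r}" for c
  proof -
    obtain a where a: "l < a" "a < w0" "Phi g w0 a \<le> c"
    proof -
      obtain a' where a': "l < a'" "\<And>y. l < y \<Longrightarrow> y < a' \<Longrightarrow> - c \<le> integral {y..w0} (\<lambda>w. 1 / g w)"
        using left[unfolded filterlim_at_top, rule_format, of "- c"]
        by (auto simp: eventually_at_right_field)
      define a where "a = (l + min a' w0) / 2"
      have "l < a" "a < w0" "a < a'" using a' w0 unfolding a_def by auto
      with a'(2)[of a] show thesis by (intro that[of a]) (auto simp: Phi_def)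
    qed
    obtain b where b: "w0 < b" "b < r" "c \<le> Phi g w0 b"
    proof -
      obtain b' where b': "b' < r" "\<And>y. b' < y \<Longrightarrow> y < r \<Longrightarrow> c \<le> integral {w0..y} (\<lambda>w. 1 / g w)"
        using right[unfolded filterlim_at_top, rule_format, of c]
        by (auto simp: eventually_at_left_field)
      define b where "b = (r + max b' w0) / 2"
      have "w0 < b" "b < r" "b' < b" using b' w0 unfolding b_def by auto
      with b'(2)[of b] show thesis by (intro that[of b]) (auto simp: Phi_def)
    qed
    have "isCont (Phi g w0) x" if "x \<in> {a..b}" for x
      using that a b DERIV_isCont[OF has_real_derivative_Phi[OF g w0, of x]] by force
    then have "continuous_on {a..b} (Phi g w0)"
      by (rule continuous_at_imp_continuous_on[OF ballI])
    then obtain x where "a \<le> x" "x \<le> b" "Phi g w0 x = c"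
      using IVT'[of "Phi g w0" a c b] a b by auto
    then show ?thesis using a b by force
  qed
  then show ?thesis by blast
qed

lemma Phi_inv_mem_has_real_derivative:
  assumes g: "continuous_on {l<..<r} g" "\<forall>x\<in>{l<..<r}. g x > 0"
    and w0: "w0 \<in> {l<..<r}" and surj: "Phi g w0 ` {l<..<r} = UNIV"
  shows "Phi_inv l r g w0 x \<in> {l<..<r}"
    and "(Phi_inv l r g w0 has_real_derivative g (Phi_inv l r g w0 x)) (at x)"
proof -
  let ?P = "Phi g w0" and ?Q = "Phi_inv l r g w0"
  have g_nz: "\<forall>x\<in>{l<..<r}. g x \<noteq> 0" using g(2) by force
  have inj: "inj_on ?P {l<..<r}"
    using strict_mono_on_Phi[OF g w0] by (rule strict_mono_on_imp_inj_on)
  have Q_mem: "?Q y \<in> {l<..<r}" and PQ: "?P (?Q y) = y" for y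
    using surj[symmetric] UNIV_I[of y] unfolding Phi_inv_def
    by (metis inv_into_into, metis f_inv_into_f)
  show "?Q x \<in> {l<..<r}" by (rule Q_mem)
  have QP: "?Q (?P z) = z" if "z \<in> {l<..<r}" for z
    unfolding Phi_inv_def using inv_into_f_f[OF inj that] .
  have P_deriv: "(?P has_real_derivative 1 / g z) (at z)" if "z \<in> {l<..<r}" for z
    using has_real_derivative_Phi[OF g(1) g_nz w0 that] .
  have Q_cont: "isCont ?Q y" for y
  proof -
    define z where "z = ?Q y"
    define d where "d = min (z - l) (r - z) / 2"
    have "d > 0" using Q_mem[of y] unfolding z_def d_def by auto
    moreover have "\<bar>u - z\<bar> \<le> d \<Longrightarrow> u \<in> {l<..<r}" for u
      using Q_mem[of y] unfolding z_def[symmetric] d_def by (auto simp: abs_if split: if_splits)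
    ultimately have "isCont ?Q (?P z)"
      using QP P_deriv DERIV_isCont by (intro isCont_inverse_function[where f="?P"]) blast+
    then show ?thesis using PQ z_def by simp
  qed
  have "(?Q has_real_derivative inverse (1 / g (?Q x))) (at x)"
    using P_deriv[OF Q_mem] g_nz Q_mem[of x] PQ Q_cont
    by (intro DERIV_inverse_function[where a="x - 1" and b="x + 1"]) auto
  then show "(?Q has_real_derivative g (?Q x)) (at x)" by simp
qed

lemma lipschitz_on_UNIV_if_derivative_bounded:
  fixes h :: "real \<Rightarrow> real"
  assumes h: "\<And>x. (h has_real_derivative h' x) (at x)" and bound: "\<And>x. \<bar>h' x\<bar> \<le> C"
  shows "C-lipschitz_on UNIV h"
proof (rule lipschitz_onI)
  show "dist (h x) (h y) \<le> C * dist x y" for x y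
    using field_differentiable_bound[of UNIV h h' C x y] h bound by (simp add: dist_norm)
  show "0 \<le> C" using bound[of 0] by linarith
qed

lemma bdd_above_abs_if_bounded:
  fixes h :: "'a \<Rightarrow> real"
  assumes "bounded (h ` S)"
  shows "bdd_above ((\<lambda>x. \<bar>h x\<bar>) ` S)"
  using assms bounded_norm_comp[of h S] by (auto dest: bounded_imp_bdd_above)

lemma bounded_C2_shift_properties:
  fixes h k m :: "real \<Rightarrow> real"
  assumes h: "\<And>x. (h has_real_derivative k x) (at x)"
    and k: "\<And>x. (k has_real_derivative m x) (at x)"
    and m: "continuous_on UNIV m"
    and bounded: "bounded (range h)" "bounded (range k)" "bounded (range m)"
  shows "\<exists>LH::real. \<forall>\<mu>::real.
    (let H = (\<lambda>x. h x - \<mu>) in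
      (\<forall>x. H differentiable (at x)) \<and>
      (\<forall>x. deriv H differentiable (at x)) \<and>
      continuous_on UNIV (deriv (deriv H)) \<and>
      bdd_above (range (\<lambda>x. \<bar>H x + \<mu>\<bar>)) \<and>
      bdd_above (range (\<lambda>x. \<bar>deriv H x\<bar>)) \<and>
      bdd_above (range (\<lambda>x. \<bar>deriv (deriv H) x\<bar>)) \<and>
      LH = (SUP x. \<bar>H x + \<mu>\<bar>) + (SUP x. \<bar>deriv H x\<bar>) + (SUP x. \<bar>deriv (deriv H) x\<bar>) \<and>
      lipschitz_on LH UNIV H \<and>
      lipschitz_on LH UNIV (deriv H) \<and>
      (SUP x. \<bar>H x\<bar>) \<le> LH + \<bar>\<mu>\<bar>)"
    (is "\<exists>LH. \<forall>\<mu>. ?P LH \<mu>")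
proof -
  have bdd: "bdd_above (range (\<lambda>x. \<bar>h x\<bar>))" "bdd_above (range (\<lambda>x. \<bar>k x\<bar>))"
    "bdd_above (range (\<lambda>x. \<bar>m x\<bar>))"
    using bounded by (auto intro: bdd_above_abs_if_bounded)
  define LH where "LH = (SUP x. \<bar>h x\<bar>) + (SUP x. \<bar>k x\<bar>) + (SUP x. \<bar>m x\<bar>)"
  have sup_nonneg: "0 \<le> (SUP x. \<bar>h x\<bar>)" "0 \<le> (SUP x. \<bar>k x\<bar>)" "0 \<le> (SUP x. \<bar>m x\<bar>)"
    using bdd by (auto intro: cSUP_upper2[of _ _ 0])
  have le_sup: "\<bar>h x\<bar> \<le> (SUP x. \<bar>h x\<bar>)" "\<bar>k x\<bar> \<le> (SUP x. \<bar>k x\<bar>)"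
    "\<bar>m x\<bar> \<le> (SUP x. \<bar>m x\<bar>)" for x
    using bdd by (auto intro: cSUP_upper)
  have k_le: "\<bar>k x\<bar> \<le> LH" and m_le: "\<bar>m x\<bar> \<le> LH" for x
    using le_sup[of x] sup_nonneg unfolding LH_def by linarith+
  have "?P LH \<mu>" for \<mu>
  proof -
    have H: "((\<lambda>x. h x - \<mu>) has_real_derivative k x) (at x)" for x
      using h[of x] by (auto intro: derivative_eq_intros)
    have deriv_H: "deriv (\<lambda>x. h x - \<mu>) = k" and deriv_k: "deriv k = m"
      using H k by (auto intro!: ext DERIV_imp_deriv)
    have sup_H: "(SUP x. \<bar>h x - \<mu>\<bar>) \<le> LH + \<bar>\<mu>\<bar>"
    proof (rule cSUP_least)
      show "\<bar>h x - \<mu>\<bar> \<le> LH + \<bar>\<mu>\<bar>" for x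
        using le_sup(1)[of x] sup_nonneg unfolding LH_def by linarith
    qed simp
    show ?thesis
      unfolding Let_def deriv_H deriv_k
    proof (intro conjI allI)
      show "(\<lambda>x. h x - \<mu>) differentiable (at x)" "k differentiable (at x)" for x
        using H k real_differentiable_def by blast+
      show "LH-lipschitz_on UNIV (\<lambda>x. h x - \<mu>)" "LH-lipschitz_on UNIV k"
        using H k k_le m_le by (blast intro: lipschitz_on_UNIV_if_derivative_bounded)+
    qed (use m bdd sup_H in \<open>simp_all add: LH_def\<close>)
  qed
  then show ?thesis by blast
qed

lemma has_real_derivative_comp_flow:
  assumes F: "(F has_real_derivative K (\<Psi> x) / g (\<Psi> x)) (at (\<Psi> x))"
    and \<Psi>: "(\<Psi> has_real_derivative g (\<Psi> x)) (at x)" and g: "g (\<Psi> x) \<noteq> 0"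
  shows "((\<lambda>x. F (\<Psi> x)) has_real_derivative K (\<Psi> x)) (at x)"
  using DERIV_chain2[OF F \<Psi>] g by simp

text \<open>The factor \<open>1/g\<close> in both derivatives is cancelled by \<open>\<Psi>' = g \<circ> \<Psi>\<close> in
  \<open>has_real_derivative_comp_flow\<close>.\<close>

lemma Lamperti_drift_derivatives:
  fixes f f' f'' g g' g'' g''' :: "real \<Rightarrow> real"
  assumes f: "(f has_real_derivative f' y) (at y)" "(f' has_real_derivative f'' y) (at y)"
    and g: "(g has_real_derivative g' y) (at y)" "(g' has_real_derivative g'' y) (at y)"
      "(g'' has_real_derivative g''' y) (at y)"
    and g_nz: "g y \<noteq> 0"
  shows "((\<lambda>y. f y / g y - 1/2 * g' y) has_real_derivative
      (f' y - f y / g y * g' y - 1/2 * g y * g'' y) / g y) (at y)"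
    and "((\<lambda>y. f' y - f y / g y * g' y - 1/2 * g y * g'' y) has_real_derivative
      (g y * f'' y - (f' y - f y / g y * g' y) * g' y - f y * g'' y
        - 1/2 * g y * g' y * g'' y - 1/2 * g y * g y * g''' y) / g y) (at y)"
proof -
  have q: "((\<lambda>y. f y / g y) has_real_derivative (f' y - f y / g y * g' y) / g y) (at y)"
    by (rule DERIV_cong[OF DERIV_divide[OF f(1) g(1) g_nz]])
      (use g_nz in \<open>simp add: field_simps power2_eq_square\<close>)
  show "((\<lambda>y. f y / g y - 1/2 * g' y) has_real_derivative
      (f' y - f y / g y * g' y - 1/2 * g y * g'' y) / g y) (at y)"
    by (rule DERIV_cong[OF DERIV_diff[OF q DERIV_cmult[OF g(2)]]])
      (use g_nz in \<open>simp add: field_simps\<close>)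
  show "((\<lambda>y. f' y - f y / g y * g' y - 1/2 * g y * g'' y) has_real_derivative
      (g y * f'' y - (f' y - f y / g y * g' y) * g' y - f y * g'' y
        - 1/2 * g y * g' y * g'' y - 1/2 * g y * g y * g''' y) / g y) (at y)"
    by (rule DERIV_cong[OF DERIV_diff[OF DERIV_diff[OF f(2) DERIV_mult[OF q g(2)]]
          DERIV_mult[OF DERIV_cmult[OF g(1)] g(3)]]])
      (use g_nz in \<open>simp add: field_simps\<close>)
qed

definition Lamperti_drift :: "(real \<Rightarrow> real) \<Rightarrow> (real \<Rightarrow> real) \<Rightarrow> real \<Rightarrow> real" where
  "Lamperti_drift f g y = f y / g y - 1/2 * deriv g y"

lemma Lamperti_drift_bounded_derivatives:
  fixes f g :: "real \<Rightarrow> real"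
  assumes f: "Ck_on_closed 2 l r f" and g: "Ck_on_closed 3 l r g"
    and g_pos: "\<forall>y\<in>{l<..<r}. g y > 0"
    and left: "((\<lambda>y. f y / g y) \<longlongrightarrow> c1) (at_right l)"
    and right: "((\<lambda>y. f y / g y) \<longlongrightarrow> c2) (at_left r)"
  obtains K M where "\<And>y. y \<in> {l<..<r} \<Longrightarrow> (Lamperti_drift f g has_real_derivative K y / g y) (at y)"
    and "\<And>y. y \<in> {l<..<r} \<Longrightarrow> (K has_real_derivative M y / g y) (at y)"
    and "\<And>y. y \<in> {l<..<r} \<Longrightarrow> isCont M y"
    and "bounded (Lamperti_drift f g ` {l<..<r})" "bounded (K ` {l<..<r})" "bounded (M ` {l<..<r})"
proof -
  let ?S = "{l<..<r}"
  define f1 where "f1 = deriv f"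
  define f2 where "f2 = (deriv ^^ 2) f"
  define g1 where "g1 = deriv g"
  define g2 where "g2 = (deriv ^^ 2) g"
  define g3 where "g3 = (deriv ^^ 3) g"
  note Df = Ck_on_closed_higher_deriv[OF f] and Dg = Ck_on_closed_higher_deriv[OF g]
  have derivs: "(f has_real_derivative f1 y) (at y)" "(f1 has_real_derivative f2 y) (at y)"
    "(g has_real_derivative g1 y) (at y)" "(g1 has_real_derivative g2 y) (at y)"
    "(g2 has_real_derivative g3 y) (at y)" if "y \<in> ?S" for y
    using Df(1)[of 0 y] Df(1)[of 1 y] Dg(1)[of 0 y] Dg(1)[of 1 y] Dg(1)[of 2 y] that
    by (simp_all add: f1_def f2_def g1_def g2_def g3_def numeral_2_eq_2 numeral_3_eq_3)
  have cont: "isCont f y" "isCont f1 y" "isCont f2 y" "isCont g y" "isCont g1 y" "isCont g2 y"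
    "isCont g3 y" if "y \<in> ?S" for y
    using derivs[OF that] Df(2)[of 2 y] Dg(2)[of 3 y] that
    by (auto simp: f2_def g3_def dest: DERIV_isCont)
  have bounded: "bounded (f ` ?S)" "bounded (f1 ` ?S)" "bounded (f2 ` ?S)" "bounded (g ` ?S)"
    "bounded (g1 ` ?S)" "bounded (g2 ` ?S)" "bounded (g3 ` ?S)"
    using Df(3)[of 0] Df(3)[of 1] Df(3)[of 2] Dg(3)[of 0] Dg(3)[of 1] Dg(3)[of 2] Dg(3)[of 3]
    by (simp_all add: f1_def f2_def g1_def g2_def g3_def)
  have "bounded ((\<lambda>y. f y / g y) ` ?S)"
    using g_pos by (intro bounded_ratio_image_greaterThanLessThan_if_tendsto[OF
        Ck_on_closed_imp_continuous_on[OF f] Ck_on_closed_imp_continuous_on[OF g] _ left right]) force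
  have g_nz: "g y \<noteq> 0" if "y \<in> ?S" for y using g_pos that by force
  have drift: "Lamperti_drift f g = (\<lambda>y. f y / g y - 1/2 * g1 y)"
    by (simp add: fun_eq_iff Lamperti_drift_def g1_def)
  define K where "K y = f1 y - f y / g y * g1 y - 1/2 * g y * g2 y" for y
  define M where "M y = g y * f2 y - (f1 y - f y / g y * g1 y) * g1 y - f y * g2 y
      - 1/2 * g y * g1 y * g2 y - 1/2 * g y * g y * g3 y" for y
  show thesis
  proof (rule that[of K M])
    fix y assume y: "y \<in> ?S"
    show "(Lamperti_drift f g has_real_derivative K y / g y) (at y)"
      "(K has_real_derivative M y / g y) (at y)"
      unfolding drift K_def M_def
      by (rule Lamperti_drift_derivatives[of f f1 y f2 g g1 g2 g3, OF derivs[OF y] g_nz[OF y]])+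
    show "isCont M y"
      unfolding M_def using cont[OF y] g_nz[OF y] by (intro continuous_intros) auto
  next
    show "bounded (Lamperti_drift f g ` ?S)" "bounded (K ` ?S)" "bounded (M ` ?S)"
      unfolding drift K_def M_def using bounded \<open>bounded ((\<lambda>y. f y / g y) ` ?S)\<close>
      by (intro bounded_minus_comp bounded_mult_comp bounded_const_comp; simp)+
  qed
qed

lemma bounded_derivatives_comp_flow:
  fixes \<Psi> g F K M :: "real \<Rightarrow> real"
  assumes \<Psi>: "\<And>x. \<Psi> x \<in> S" "\<And>x. (\<Psi> has_real_derivative g (\<Psi> x)) (at x)"
    and g_nz: "\<forall>y\<in>S. g y \<noteq> 0"
    and F: "\<And>y. y \<in> S \<Longrightarrow> (F has_real_derivative K y / g y) (at y)"
    and K: "\<And>y. y \<in> S \<Longrightarrow> (K has_real_derivative M y / g y) (at y)"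
    and M: "\<And>y. y \<in> S \<Longrightarrow> isCont M y"
    and bounded: "bounded (F ` S)" "bounded (K ` S)" "bounded (M ` S)"
  shows "\<And>x. ((\<lambda>x. F (\<Psi> x)) has_real_derivative K (\<Psi> x)) (at x)"
    and "\<And>x. ((\<lambda>x. K (\<Psi> x)) has_real_derivative M (\<Psi> x)) (at x)"
    and "continuous_on UNIV (\<lambda>x. M (\<Psi> x))"
    and "bounded (range (\<lambda>x. F (\<Psi> x)))" "bounded (range (\<lambda>x. K (\<Psi> x)))"
      "bounded (range (\<lambda>x. M (\<Psi> x)))"
proof -
  have "g (\<Psi> x) \<noteq> 0" for x using g_nz \<Psi>(1) by blast
  then show "((\<lambda>x. F (\<Psi> x)) has_real_derivative K (\<Psi> x)) (at x)"
    "((\<lambda>x. K (\<Psi> x)) has_real_derivative M (\<Psi> x)) (at x)" for x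
    using has_real_derivative_comp_flow[where \<Psi>=\<Psi> and g=g and K=K, OF F[OF \<Psi>(1)] \<Psi>(2)]
      has_real_derivative_comp_flow[where \<Psi>=\<Psi> and g=g and K=M, OF K[OF \<Psi>(1)] \<Psi>(2)]
    by blast+
  have "isCont (\<lambda>x. M (\<Psi> x)) x" for x
    using isCont_o2[OF DERIV_isCont[OF \<Psi>(2)] M[OF \<Psi>(1)]] .
  then show "continuous_on UNIV (\<lambda>x. M (\<Psi> x))"
    by (simp add: continuous_at_imp_continuous_on)
  have "range (\<lambda>x. h (\<Psi> x)) \<subseteq> h ` S" for h :: "real \<Rightarrow> real"
    using \<Psi>(1) by auto
  then show "bounded (range (\<lambda>x. F (\<Psi> x)))" "bounded (range (\<lambda>x. K (\<Psi> x)))"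
    "bounded (range (\<lambda>x. M (\<Psi> x)))"
    using bounded bounded_subset by blast+
qed

theorem proposition2p2:
  fixes l r w0 :: real and f g :: "real \<Rightarrow> real"
  assumes lr: "l < r"
    and A1: "Ck_on_closed 2 l r f"
    and A2_C3: "Ck_on_closed 3 l r g"
    and A2_pos: "\<forall>x\<in>{l<..<r}. g x > 0"
    and A2_left: "\<forall>v\<in>{l<..<r}. filterlim (\<lambda>a. integral {a..v} (\<lambda>w. 1 / g w)) at_top (at_right l)"
    and A2_right: "\<forall>v\<in>{l<..<r}. filterlim (\<lambda>b. integral {v..b} (\<lambda>w. 1 / g w)) at_top (at_left r)"
    and A3_left: "\<exists>c. ((\<lambda>x. f x / g x) \<longlongrightarrow> c) (at_right l)"
    and A3_right: "\<exists>c. ((\<lambda>x. f x / g x) \<longlongrightarrow> c) (at_left r)"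
    and w0: "w0 \<in> {l<..<r}"
  shows "\<exists>LH::real. \<forall>\<mu>::real.
    (let H = (\<lambda>x. Htilde l r f g w0 x - \<mu>) in
      (\<forall>x. H differentiable (at x)) \<and>
      (\<forall>x. deriv H differentiable (at x)) \<and>
      continuous_on UNIV (deriv (deriv H)) \<and>
      bdd_above (range (\<lambda>x. \<bar>H x + \<mu>\<bar>)) \<and>
      bdd_above (range (\<lambda>x. \<bar>deriv H x\<bar>)) \<and>
      bdd_above (range (\<lambda>x. \<bar>deriv (deriv H) x\<bar>)) \<and>
      LH = (SUP x. \<bar>H x + \<mu>\<bar>) + (SUP x. \<bar>deriv H x\<bar>) + (SUP x. \<bar>deriv (deriv H) x\<bar>) \<and>
      lipschitz_on LH UNIV H \<and>
      lipschitz_on LH UNIV (deriv H) \<and>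
      (SUP x. \<bar>H x\<bar>) \<le> LH + \<bar>\<mu>\<bar>)"
proof -
  let ?S = "{l<..<r}" and ?\<Psi> = "Phi_inv l r g w0"
  obtain c1 c2 where lims:
      "((\<lambda>x. f x / g x) \<longlongrightarrow> c1) (at_right l)" "((\<lambda>x. f x / g x) \<longlongrightarrow> c2) (at_left r)"
    using A3_left A3_right by blast
  obtain K M where derivatives:
      "\<And>y. y \<in> ?S \<Longrightarrow> (Lamperti_drift f g has_real_derivative K y / g y) (at y)"
      "\<And>y. y \<in> ?S \<Longrightarrow> (K has_real_derivative M y / g y) (at y)"
    and M_cont: "\<And>y. y \<in> ?S \<Longrightarrow> isCont M y"
    and bounded: "bounded (Lamperti_drift f g ` ?S)" "bounded (K ` ?S)" "bounded (M ` ?S)"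
    using Lamperti_drift_bounded_derivatives[OF A1 A2_C3 A2_pos lims] by metis
  have g_cont: "continuous_on ?S g"
    using Ck_on_closed_imp_continuous_on[OF A2_C3] by (rule continuous_on_subset) auto
  have g_nz: "\<forall>y\<in>?S. g y \<noteq> 0" using A2_pos by force
  have "Phi g w0 ` ?S = UNIV"
    using Phi_image_eq_UNIV[OF g_cont g_nz w0] A2_left A2_right w0 by blast
  then have \<Psi>: "\<And>x. ?\<Psi> x \<in> ?S" "\<And>x. (?\<Psi> has_real_derivative g (?\<Psi> x)) (at x)"
    using Phi_inv_mem_has_real_derivative[OF g_cont A2_pos w0] by blast+
  have "Htilde l r f g w0 = (\<lambda>x. Lamperti_drift f g (?\<Psi> x))"
    by (simp add: Htilde_def Lamperti_drift_def fun_eq_iff)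
  then show ?thesis
    using bounded_C2_shift_properties[OF
        bounded_derivatives_comp_flow[OF \<Psi> g_nz derivatives M_cont bounded]]
    by simp
qed

end
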